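(* Let $p$ be a prime, $d\geq3$ odd, $\nu\geq0$, $n\geq2$, $q=p^f$ with $f\in\{1,2,\ldots\}\cup\{\infty\}$ (convention $p^\infty=0$, and $f\geq2$ if $p=2$). Let $G=\langle x_1,\ldots,x_d\mid r_0,r_1,\ldots,r_\nu\rangle$ be a minimal pro-$p$ presentation with $r_0=x_1^q[x_1,{}_n\,x_2][x_2,x_3][x_4,x_5]\cdots[x_{d-1},x_d]\cdot s$, $r_1,\ldots,r_\nu\in S'$, $s\in S''$, where $S$ is the closed subgroup generated by $x_3,\ldots,x_d$. Let $\theta\colon G\to1+p\mathbb{Z}_p$ be an orientation such that the cyclotomic pro-$p$ pair $(G,\theta)$ is torsion-free. If $(G,\theta)$ is Kummerian, then $q=0$ and $\theta(x_i)=1$ for $i=2,\ldots,d$.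
   Context: Commutators $[x,y]=x^{-1}y^{-1}xy$, $[y,{}_k x]$ left-normed with $x$ repeated $k$ times; $H'$ closed commutator subgroup, $H''=(H')'$. An orientation is a continuous homomorphism $\theta\colon G\to1+p\mathbb{Z}_p$; $(G,\theta)$ is a cyclotomic pro-$p$ pair, called torsion-free if $p$ is odd or if $p=2$ and $\theta(G)\subseteq1+4\mathbb{Z}_2$. $\mathbb{Z}_p(\theta)$ denotes $\mathbb{Z}_p$ with $G$-action $g.\lambda=\theta(g)\lambda$. The pair is Kummerian if for every $k\geq1$ the map $H^1(G,\mathbb{Z}_p(\theta)/p^k\mathbb{Z}_p(\theta))\to H^1(G,\mathbb{F}_p)$ induced by reduction mod $p$ is surjective. *)

theory Defs
  imports "HOL-Algebra.Algebra" "HOL-Analysis.Product_Topology" "HOL-Analysis.T1_Spaces"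
begin

definition topgroup :: "('a, 'b) monoid_scheme \<Rightarrow> 'a topology \<Rightarrow> bool" where
  "topgroup G T \<longleftrightarrow> group G \<and> topspace T = carrier G \<and>
     continuous_map (prod_topology T T) T (\<lambda>(a, b). a \<otimes>\<^bsub>G\<^esub> b) \<and>
     continuous_map T T (\<lambda>a. inv\<^bsub>G\<^esub> a)"

definition pro_p_group :: "nat \<Rightarrow> ('a, 'b) monoid_scheme \<Rightarrow> 'a topology \<Rightarrow> bool" where
  "pro_p_group p G T \<longleftrightarrow> topgroup G T \<and> compact_space T \<and> Hausdorff_space T \<and>
     (\<forall>U. openin T U \<and> \<one>\<^bsub>G\<^esub> \<in> U \<longrightarrow> (\<exists>N. N \<lhd> G \<and> openin T N \<and> N \<subseteq> U)) \<and>
     (\<forall>N. N \<lhd> G \<and> openin T N \<longrightarrow> (\<exists>e. card (rcosets\<^bsub>G\<^esub> N) = p ^ e))"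

text \<open>Free pro-p group on generators x 1, ..., x d, via the universal property with respect
  to finite p-groups (continuous homomorphisms to discrete finite p-groups; every finite group
  is isomorphic to one with carrier a set of naturals).\<close>
definition free_pro_p :: "nat \<Rightarrow> nat \<Rightarrow> ('a, 'b) monoid_scheme \<Rightarrow> 'a topology \<Rightarrow> (nat \<Rightarrow> 'a) \<Rightarrow> bool" where
  "free_pro_p p d F T x \<longleftrightarrow> pro_p_group p F T \<and> (\<forall>i\<in>{1..d}. x i \<in> carrier F) \<and>
     (\<forall>(H :: nat monoid) y. group H \<and> finite (carrier H) \<and> (\<exists>e. card (carrier H) = p ^ e) \<and>
        (\<forall>i\<in>{1..d}. y i \<in> carrier H) \<longrightarrow>
        (\<exists>!\<phi>. \<phi> \<in> hom F H \<and> \<phi> \<in> extensional (carrier F) \<and>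
              continuous_map T (discrete_topology (carrier H)) \<phi> \<and>
              (\<forall>i\<in>{1..d}. \<phi> (x i) = y i)))"

definition comm :: "('a, 'b) monoid_scheme \<Rightarrow> 'a \<Rightarrow> 'a \<Rightarrow> 'a" where
  "comm G a b = inv\<^bsub>G\<^esub> a \<otimes>\<^bsub>G\<^esub> inv\<^bsub>G\<^esub> b \<otimes>\<^bsub>G\<^esub> a \<otimes>\<^bsub>G\<^esub> b"

fun lcomm :: "('a, 'b) monoid_scheme \<Rightarrow> 'a \<Rightarrow> 'a \<Rightarrow> nat \<Rightarrow> 'a" where
  "lcomm G y x 0 = y"
| "lcomm G y x (Suc k) = comm G (lcomm G y x k) x"

definition gprod :: "('a, 'b) monoid_scheme \<Rightarrow> 'a list \<Rightarrow> 'a" where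
  "gprod G xs = foldr (\<lambda>a b. a \<otimes>\<^bsub>G\<^esub> b) xs \<one>\<^bsub>G\<^esub>"

definition closed_gen :: "('a, 'b) monoid_scheme \<Rightarrow> 'a topology \<Rightarrow> 'a set \<Rightarrow> 'a set" where
  "closed_gen G T A = T closure_of (generate G A)"

definition ccomm :: "('a, 'b) monoid_scheme \<Rightarrow> 'a topology \<Rightarrow> 'a set \<Rightarrow> 'a set" where
  "ccomm G T H = closed_gen G T {comm G a b | a b. a \<in> H \<and> b \<in> H}"

definition closed_normal_gen :: "('a, 'b) monoid_scheme \<Rightarrow> 'a topology \<Rightarrow> 'a set \<Rightarrow> 'a set" where
  "closed_normal_gen G T A =
     closed_gen G T {g \<otimes>\<^bsub>G\<^esub> a \<otimes>\<^bsub>G\<^esub> inv\<^bsub>G\<^esub> g | g a. g \<in> carrier G \<and> a \<in> A}"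

definition frattini :: "nat \<Rightarrow> ('a, 'b) monoid_scheme \<Rightarrow> 'a topology \<Rightarrow> 'a set" where
  "frattini p G T = closed_gen G T
     ({a [^]\<^bsub>G\<^esub> p | a. a \<in> carrier G} \<union> {comm G a b | a b. a \<in> carrier G \<and> b \<in> carrier G})"

text \<open>p-adic integers are represented by the sequence of their residues mod p^k
  (canonical representatives in [0, p^k)).  An orientation theta : G -> 1 + p Z_p is given
  as theta g k = theta(g) mod p^k.\<close>
definition orientation :: "nat \<Rightarrow> ('a, 'b) monoid_scheme \<Rightarrow> 'a topology \<Rightarrow> ('a \<Rightarrow> nat \<Rightarrow> int) \<Rightarrow> bool" where
  "orientation p G T \<theta> \<longleftrightarrow>
     (\<forall>g\<in>carrier G. \<forall>k. 0 \<le> \<theta> g k \<and> \<theta> g k < int p ^ k \<and> \<theta> g (Suc k) mod int p ^ k = \<theta> g k) \<and>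
     (\<forall>g\<in>carrier G. \<theta> g 1 = 1) \<and>
     (\<forall>g\<in>carrier G. \<forall>h\<in>carrier G. \<forall>k. \<theta> (g \<otimes>\<^bsub>G\<^esub> h) k = (\<theta> g k * \<theta> h k) mod int p ^ k) \<and>
     (\<forall>k a. openin T {g \<in> carrier G. \<theta> g k = a})"

definition padic_one :: "nat \<Rightarrow> nat \<Rightarrow> int" where
  "padic_one p k = 1 mod int p ^ k"

definition torsion_free_pair :: "nat \<Rightarrow> ('a, 'b) monoid_scheme \<Rightarrow> ('a \<Rightarrow> nat \<Rightarrow> int) \<Rightarrow> bool" where
  "torsion_free_pair p G \<theta> \<longleftrightarrow> odd p \<or> (p = 2 \<and> (\<forall>g\<in>carrier G. \<theta> g 2 = 1))"

text \<open>Continuous 1-cocycles G -> Z_p(theta)/p^k, values as canonical residues;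
  G acts via g.lambda = theta(g) lambda.\<close>
definition cocycle :: "nat \<Rightarrow> ('a, 'b) monoid_scheme \<Rightarrow> 'a topology \<Rightarrow> ('a \<Rightarrow> nat \<Rightarrow> int) \<Rightarrow> nat \<Rightarrow> ('a \<Rightarrow> int) \<Rightarrow> bool" where
  "cocycle p G T \<theta> k c \<longleftrightarrow>
     (\<forall>g\<in>carrier G. 0 \<le> c g \<and> c g < int p ^ k) \<and>
     (\<forall>g\<in>carrier G. \<forall>h\<in>carrier G. c (g \<otimes>\<^bsub>G\<^esub> h) = (c g + \<theta> g k * c h) mod int p ^ k) \<and>
     (\<forall>a. openin T {g \<in> carrier G. c g = a})"

definition coboundary :: "nat \<Rightarrow> ('a, 'b) monoid_scheme \<Rightarrow> ('a \<Rightarrow> nat \<Rightarrow> int) \<Rightarrow> nat \<Rightarrow> ('a \<Rightarrow> int) \<Rightarrow> bool" where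
  "coboundary p G \<theta> k b \<longleftrightarrow> (\<exists>a. \<forall>g\<in>carrier G. b g = ((\<theta> g k - 1) * a) mod int p ^ k)"

text \<open>Kummerian: for every k >= 1 the reduction map H^1(G, Z_p(theta)/p^k) -> H^1(G, F_p)
  is surjective (F_p = Z_p(theta)/p, with trivial action as theta = 1 mod p): every class
  mod p is the reduction of a class mod p^k, i.e. every cocycle mod p differs from the
  reduction of some cocycle mod p^k by a coboundary mod p.\<close>
definition kummerian :: "nat \<Rightarrow> ('a, 'b) monoid_scheme \<Rightarrow> 'a topology \<Rightarrow> ('a \<Rightarrow> nat \<Rightarrow> int) \<Rightarrow> bool" where
  "kummerian p G T \<theta> \<longleftrightarrow>
     (\<forall>k\<ge>1. \<forall>\<phi>. cocycle p G T \<theta> 1 \<phi> \<longrightarrow>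
        (\<exists>c b. cocycle p G T \<theta> k c \<and> coboundary p G \<theta> 1 b \<and>
               (\<forall>g\<in>carrier G. c g mod int p = (\<phi> g + b g) mod int p)))"

end

(*
  Pull a continuous cocycle G -> Z_p(theta)/p^k back along the presentation: it becomes a
  crossed homomorphism c : F -> Z/p^k twisted by theta, which vanishes on the relator r_0 and,
  by continuity, on the element s of the second derived group S''. The Kummerian property lifts
  the mod-p cocycle dual to any generator x_j to every level k.

  Suppose theta(x_i) = 1 mod p^E for all i >= 2 and take k = E + 1. Then [x_1, n x_2] and
  every pair [x_2j, x_2j+1] on which c vanishes mod p contribute nothing to c(r_0) = 0 mod p^k.
  For the cocycle dual to x_1 the relation leaves c(x_1) (1 + t + ... + t^(q-1)) = 0 mod p^k with
  t = theta(x_1); for q = p^E this contradicts the fact that the geometric sum has p-adic valuation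
  exactly E (this is where torsion-freeness enters, through t = 1 mod 4 when p = 2). For the cocycle
  dual to the partner of x_i in its pair, with q = 0 or q = p^f, f >= E, only that pair survives,
  and the commutator formula then forces theta(x_i) = 1 mod p^(E+1). Induction on E gives
  theta(x_i) = 1 for i >= 2 up to level f whenever q = p^f, which is impossible, so q = 0, and
  then at every level.
*)

theory Submission
  imports Defs "HOL-Number_Theory.Cong"
begin

section \<open>Geometric sums at prime powers\<close>

lemma geometric_sum_mult:
  fixes t :: "'a::comm_semiring_1"
  shows "(\<Sum>i<a * b. t ^ i) = (\<Sum>i<a. t ^ i) * (\<Sum>i<b. (t ^ a) ^ i)"
proof -
  have "(\<Sum>i<a * b. t ^ i) = (\<Sum>j<b. \<Sum>i\<in>{j * a..<j * a + a}. t ^ i)"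
    by (simp add: sum.nat_group mult.commute)
  also have "\<dots> = (\<Sum>j<b. (t ^ a) ^ j * (\<Sum>i<a. t ^ i))"
  proof (rule sum.cong)
    fix j
    show "(\<Sum>i\<in>{j * a..<j * a + a}. t ^ i) = (t ^ a) ^ j * (\<Sum>i<a. t ^ i)"
      using sum.shift_bounds_nat_ivl[of "power t" 0 "j * a" a]
      by (simp add: atLeast0LessThan power_add power_mult sum_distrib_right ac_simps)
  qed simp
  also have "\<dots> = (\<Sum>i<a. t ^ i) * (\<Sum>j<b. (t ^ a) ^ j)"
    by (metis mult.commute sum_distrib_right)
  finally show ?thesis .
qed

lemma power_cong_linear:
  fixes u :: int
  shows "[u ^ i = 1 + int i * (u - 1)] (mod (u - 1)\<^sup>2)"
proof (induction i)
  case (Suc i)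
  have "[u ^ Suc i = u * (1 + int i * (u - 1))] (mod (u - 1)\<^sup>2)"
    using Suc by (simp add: cong_scalar_left)
  also have "u * (1 + int i * (u - 1)) = 1 + int (Suc i) * (u - 1) + int i * (u - 1)\<^sup>2"
    by (simp add: algebra_simps power2_eq_square)
  also have "[\<dots> = 1 + int (Suc i) * (u - 1)] (mod (u - 1)\<^sup>2)"
    by (simp add: cong_iff_dvd_diff)
  finally show ?case .
qed simp

lemma geometric_sum_prime_cong:
  fixes p :: nat and u :: int
  assumes "Factorial_Ring.prime p" and "[u = 1] (mod p)" and "p = 2 \<Longrightarrow> [u = 1] (mod 4)"
  shows "[(\<Sum>i<p. u ^ i) = p] (mod int p ^ 2)"
proof -
  have "int p dvd u - 1" using assms(2) by (simp add: cong_iff_dvd_diff)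
  then have p2: "int p ^ 2 dvd (u - 1)\<^sup>2" by (simp add: dvd_power_same)
  have "[(\<Sum>i<p. u ^ i) = (\<Sum>i<p. 1 + int i * (u - 1))] (mod int p ^ 2)"
    by (rule cong_sum) (rule cong_dvd_modulus[OF power_cong_linear p2])
  also have "(\<Sum>i<p. 1 + int i * (u - 1)) = p + (u - 1) * (\<Sum>i<p. int i)"
    by (simp add: sum.distrib sum_distrib_left mult.commute)
  also have "[\<dots> = p] (mod int p ^ 2)"
  proof -
    have "int p ^ 2 dvd (u - 1) * (\<Sum>i<p. int i)"
    proof (cases "p = 2")
      case True
      have "(\<Sum>i<p. int i) = 1" using True by (simp add: numeral_2_eq_2)
      moreover have "int p ^ 2 dvd u - 1" using assms(3) True by (simp add: cong_iff_dvd_diff)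
      ultimately show ?thesis by (metis mult.right_neutral)
    next
      case False
      then have "odd p" using prime_odd_nat[OF assms(1)] prime_ge_2_nat[OF assms(1)] by simp
      then obtain h where h: "p = 2 * h + 1" by (rule oddE)
      then have "(\<Sum>i<p. int i) = (\<Sum>i = 0..2 * h. int i)"
        by (simp add: lessThan_Suc_atMost atLeast0AtMost)
      then have "(\<Sum>i<p. int i) = int h * int p"
        using double_gauss_sum[of "2 * h", where 'a = int] h by simp
      then have "int p dvd (\<Sum>i<p. int i)" by simp
      then show ?thesis using mult_dvd_mono[OF \<open>int p dvd u - 1\<close>] by (simp add: power2_eq_square)
    qed
    then show ?thesis by (simp add: cong_iff_dvd_diff)
  qed
  finally show ?thesis .
qed

lemma prime_power_exactly_dvd_geometric_sum:
  fixes p :: nat and t :: int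
  assumes p: "Factorial_Ring.prime p" and t: "[t = 1] (mod p)" and t4: "p = 2 \<Longrightarrow> [t = 1] (mod 4)"
  shows "int p ^ f dvd (\<Sum>i<p ^ f. t ^ i) \<and> \<not> int p ^ Suc f dvd (\<Sum>i<p ^ f. t ^ i)"
proof (induction f)
  case 0
  then show ?case using prime_gt_1_nat[OF p] by simp
next
  case (Suc f)
  have pp: "Factorial_Ring.prime (int p)" using p by simp
  from Suc obtain a where a: "(\<Sum>i<p ^ f. t ^ i) = int p ^ f * a" and "\<not> int p dvd a"
    by (auto simp: dvd_def)
  have "[(\<Sum>i<p. (t ^ p ^ f) ^ i) = p] (mod int p ^ 2)"
    using geometric_sum_prime_cong[OF p] cong_pow[OF t] cong_pow[OF t4] by simp
  then obtain k where "int p = (\<Sum>i<p. (t ^ p ^ f) ^ i) + int p ^ 2 * k"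
    by (auto simp: cong_iff_lin)
  then have k: "(\<Sum>i<p. (t ^ p ^ f) ^ i) = int p * (1 - int p * k)"
    by (simp add: algebra_simps power2_eq_square)
  have "\<not> int p dvd 1 - int p * k"
    using pp by (metis dvd_add_left_iff dvd_triv_left not_prime_unit diff_add_cancel)
  then have "\<not> int p dvd a * (1 - int p * k)"
    using \<open>\<not> int p dvd a\<close> pp by (simp add: prime_dvd_mult_iff)
  moreover have "(\<Sum>i<p ^ Suc f. t ^ i) = int p ^ Suc f * (a * (1 - int p * k))"
    using geometric_sum_mult[of t "p ^ f" p] a k by (simp add: algebra_simps)
  ultimately show ?case using prime_gt_0_nat[OF p] by simp
qed

lemma coprime_power_if_cong_1:
  fixes t m :: int
  shows "[t = 1] (mod m) \<Longrightarrow> coprime t (m ^ k)"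
  using cong_imp_coprime[of 1 t m] by (simp add: cong_sym_eq)

lemma gprod_Nil [simp]: "gprod G [] = \<one>\<^bsub>G\<^esub>"
  by (simp add: gprod_def)

lemma gprod_Cons [simp]: "gprod G (a # xs) = a \<otimes>\<^bsub>G\<^esub> gprod G xs"
  by (simp add: gprod_def)

lemma (in monoid) gprod_closed: "set ws \<subseteq> carrier G \<Longrightarrow> gprod G ws \<in> carrier G"
  by (induction ws) simp_all

lemma (in monoid) gprod_append:
  "set xs \<subseteq> carrier G \<Longrightarrow> set ys \<subseteq> carrier G \<Longrightarrow> gprod G (xs @ ys) = gprod G xs \<otimes> gprod G ys"
  by (induction xs) (simp_all add: m_assoc gprod_closed)

lemma (in group) comm_closed [intro, simp]:
  "g \<in> carrier G \<Longrightarrow> h \<in> carrier G \<Longrightarrow> comm G g h \<in> carrier G"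
  by (simp add: comm_def)

lemma (in group) lcomm_closed [intro, simp]:
  "g \<in> carrier G \<Longrightarrow> h \<in> carrier G \<Longrightarrow> lcomm G g h k \<in> carrier G"
  by (induction k) simp_all

lemma (in group) mult_comm_eq:
  assumes "g \<in> carrier G" "h \<in> carrier G"
  shows "h \<otimes> g \<otimes> comm G g h = g \<otimes> h"
proof -
  have "comm G g h = inv (h \<otimes> g) \<otimes> (g \<otimes> h)"
    using assms by (simp add: comm_def inv_mult_group m_assoc)
  with assms show ?thesis
    by (simp add: m_assoc[symmetric])
qed

lemma (in comm_group) comm_eq_one:
  assumes "a \<in> carrier G" "b \<in> carrier G"
  shows "comm G a b = \<one>"
proof -
  have "comm G a b = inv a \<otimes> (inv b \<otimes> a) \<otimes> b"
    using assms by (simp add: comm_def m_assoc)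
  also have "inv b \<otimes> a = a \<otimes> inv b"
    using assms by (simp add: m_comm)
  also have "inv a \<otimes> (a \<otimes> inv b) \<otimes> b = \<one>"
    using assms by (simp add: m_assoc[symmetric])
  finally show ?thesis .
qed

lemma (in group_hom) hom_comm:
  "a \<in> carrier G \<Longrightarrow> b \<in> carrier G \<Longrightarrow> h (comm G a b) = comm H (h a) (h b)"
  by (simp add: comm_def)

lemma (in group_hom) eq_if_kernel_subset:
  assumes "group_hom G K \<pi>" "kernel G K \<pi> \<subseteq> kernel G H h"
    and "f \<in> carrier G" "f' \<in> carrier G" "\<pi> f = \<pi> f'"
  shows "h f = h f'"
proof -
  interpret \<pi>: group_hom G K \<pi> by fact
  have "f \<otimes> inv f' \<in> kernel G K \<pi>"
    using assms(3-5) by (simp add: kernel_def)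
  then have "f \<otimes> inv f' \<in> kernel G H h"
    using assms(2) by blast
  then have "h f \<otimes>\<^bsub>H\<^esub> inv\<^bsub>H\<^esub> h f' = \<one>\<^bsub>H\<^esub>"
    using assms(3,4) by (simp add: kernel_def)
  then show ?thesis
    using assms(3,4) H.inv_solve_right' by simp
qed

lemma closed_gen_subset:
  assumes "group G" "subgroup H G" "closedin TG H" "S \<subseteq> H"
  shows "closed_gen G TG S \<subseteq> H"
  unfolding closed_gen_def
  using group.generate_subgroup_incl[OF assms(1,4,2)] closure_of_minimal assms(3) by blast

lemma closed_normal_gen_subset:
  assumes "group G" "K \<lhd> G" "closedin TG K" "S \<subseteq> K"
  shows "closed_normal_gen G TG S \<subseteq> K"
  unfolding closed_normal_gen_def
  using assms normal.inv_op_closed2[OF assms(2)]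
  by (intro closed_gen_subset normal_imp_subgroup) auto

lemma mem_closed_normal_gen:
  fixes G (structure)
  assumes "group G" "topspace TG = carrier G" "S \<subseteq> carrier G" "a \<in> S"
  shows "a \<in> closed_normal_gen G TG S"
proof -
  interpret group G by fact
  let ?C = "{g \<otimes> a \<otimes> inv g | g a. g \<in> carrier G \<and> a \<in> S}"
  have "a \<in> ?C"
    using assms(3,4) by (intro CollectI exI[of _ \<one>] exI[of _ a]) auto
  then have "a \<in> generate G ?C" by (rule generate.incl)
  moreover have "generate G ?C \<subseteq> topspace TG"
    using generate_incl[of ?C] assms(2,3) by fastforce
  ultimately show ?thesis
    unfolding closed_normal_gen_def closed_gen_def using closure_of_subset by blast
qed

lemma frattini_subset_kernel:
  assumes "group_hom F H h" "comm_group H" "order H = p" "closedin TF (kernel F H h)"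
  shows "frattini p F TF \<subseteq> kernel F H h"
  unfolding frattini_def
proof (rule closed_gen_subset[OF _ _ assms(4)])
  interpret group_hom F H h by fact
  interpret H: comm_group H by fact
  show "group F" by (rule G.is_group)
  show "subgroup (kernel F H h) F" by (rule subgroup_kernel)
  show "{a [^]\<^bsub>F\<^esub> p | a. a \<in> carrier F} \<union> {comm F a b | a b. a \<in> carrier F \<and> b \<in> carrier F}
      \<subseteq> kernel F H h"
    using H.pow_order_eq_1 assms(3) by (auto simp: kernel_def hom_nat_pow hom_comm H.comm_eq_one)
qed

lemma continuous_map_discrete_UNIV_iff:
  "continuous_map TX (discrete_topology UNIV) f \<longleftrightarrow> (\<forall>a. openin TX {x \<in> topspace TX. f x = a})"
proof
  assume "continuous_map TX (discrete_topology UNIV) f"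
  then show "\<forall>a. openin TX {x \<in> topspace TX. f x = a}"
    using openin_continuous_map_preimage[where U = "{a}" for a] by fastforce
next
  assume fibers: "\<forall>a. openin TX {x \<in> topspace TX. f x = a}"
  have "openin TX {x \<in> topspace TX. f x \<in> U}" for U
  proof -
    have "{x \<in> topspace TX. f x \<in> U} = (\<Union>a\<in>U. {x \<in> topspace TX. f x = a})" by auto
    then show ?thesis using fibers by auto
  qed
  then show "continuous_map TX (discrete_topology UNIV) f"
    by (simp add: continuous_map_def)
qed

definition zmod_group :: "nat \<Rightarrow> nat monoid" where
  "zmod_group p = \<lparr>carrier = {..<p}, monoid.mult = (\<lambda>a b. (a + b) mod p), one = 0\<rparr>"

lemma comm_group_zmod_group:
  assumes "0 < p"
  shows "comm_group (zmod_group p)"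
proof (rule comm_groupI)
  show "\<exists>y \<in> carrier (zmod_group p). y \<otimes>\<^bsub>zmod_group p\<^esub> x = \<one>\<^bsub>zmod_group p\<^esub>"
    if "x \<in> carrier (zmod_group p)" for x
    using that assms
    by (intro bexI[of _ "(p - x) mod p"]) (simp_all add: zmod_group_def mod_add_left_eq)
qed (use assms in \<open>auto simp: zmod_group_def mod_add_left_eq mod_add_right_eq ac_simps\<close>)

lemma carrier_zmod_group [simp]: "carrier (zmod_group p) = {..<p}"
  by (simp add: zmod_group_def)

lemma order_zmod_group: "order (zmod_group p) = p"
  by (simp add: order_def)

section \<open>Crossed homomorphisms modulo an integer\<close>

text \<open>\<open>A\<close> is a 1-cocycle of \<open>F\<close> with values in \<open>\<int>/N\<close>, on which \<open>F\<close> acts through the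
  character \<open>T\<close>. For \<open>N = p^k\<close> these are the cocycles with values in \<open>\<int>\<^sub>p(\<theta>)/p^k\<close>,
  pulled back to the free group of the presentation.\<close>

locale crossed_hom_mod = group F for F (structure) +
  fixes N :: int and A T :: "'a \<Rightarrow> int"
  assumes A_mult: "f \<in> carrier F \<Longrightarrow> g \<in> carrier F \<Longrightarrow> [A (f \<otimes> g) = A f + T f * A g] (mod N)"
    and T_mult: "f \<in> carrier F \<Longrightarrow> g \<in> carrier F \<Longrightarrow> [T (f \<otimes> g) = T f * T g] (mod N)"
    and T_coprime: "f \<in> carrier F \<Longrightarrow> coprime (T f) N"
begin

lemma T_one: "[T \<one> = 1] (mod N)"
proof -
  have "[T \<one> * T \<one> = T \<one> * 1] (mod N)"
    using T_mult[of \<one> \<one>] by (simp add: cong_sym)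
  then show ?thesis using cong_mult_lcancel[OF T_coprime[of \<one>]] by blast
qed

lemma A_one: "[A \<one> = 0] (mod N)"
proof -
  have "[A \<one> + T \<one> * A \<one> = A \<one> + T \<one> * 0] (mod N)"
    using A_mult[of \<one> \<one>] by (simp add: cong_sym)
  then have "[T \<one> * A \<one> = T \<one> * 0] (mod N)"
    by (simp add: cong_add_lcancel_0)
  then show ?thesis
    using cong_mult_lcancel[of "T \<one>" N "A \<one>" 0] T_coprime[of \<one>] by blast
qed

lemma T_comm:
  assumes "g \<in> carrier F" "h \<in> carrier F"
  shows "[T (comm F g h) = 1] (mod N)"
proof -
  have "[T (h \<otimes> g) * T (comm F g h) = T h * T g * T (comm F g h)] (mod N)"
    using assms by (intro cong_scalar_right T_mult)
  then have "[T g * T h * T (comm F g h) = T (h \<otimes> g) * T (comm F g h)] (mod N)"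
    by (simp add: cong_sym_eq ac_simps)
  also have "[T (h \<otimes> g) * T (comm F g h) = T (g \<otimes> h)] (mod N)"
    using T_mult[of "h \<otimes> g" "comm F g h"] mult_comm_eq assms by (simp add: cong_sym)
  also have "[T (g \<otimes> h) = T g * T h * 1] (mod N)"
    using T_mult assms by simp
  finally have "[T g * T h * T (comm F g h) = T g * T h * 1] (mod N)" .
  moreover have "coprime (T g * T h) N"
    using T_coprime assms by simp
  ultimately show ?thesis
    using cong_mult_lcancel[of "T g * T h" N "T (comm F g h)" 1] by blast
qed

lemma A_comm:
  assumes "g \<in> carrier F" "h \<in> carrier F"
  shows "[T g * T h * A (comm F g h) = A h * (T g - 1) - A g * (T h - 1)] (mod N)"
proof -
  let ?w = "comm F g h"
  have "[A g + T g * A h = A (h \<otimes> g \<otimes> ?w)] (mod N)"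
    using A_mult mult_comm_eq assms by (simp add: cong_sym)
  also have "[A (h \<otimes> g \<otimes> ?w) = A (h \<otimes> g) + T (h \<otimes> g) * A ?w] (mod N)"
    using A_mult assms by simp
  also have "[A (h \<otimes> g) + T (h \<otimes> g) * A ?w = (A h + T h * A g) + (T h * T g) * A ?w] (mod N)"
    using A_mult[of h g] T_mult[of h g] assms by (simp add: cong_add cong_scalar_right)
  finally have "N dvd (A g + T g * A h) - ((A h + T h * A g) + (T h * T g) * A ?w)"
    by (simp add: cong_iff_dvd_diff)
  moreover have "(A g + T g * A h) - ((A h + T h * A g) + (T h * T g) * A ?w)
      = (A h * (T g - 1) - A g * (T h - 1)) - T g * T h * A ?w"
    by (simp add: algebra_simps)
  ultimately show ?thesis by (simp add: cong_iff_dvd_diff dvd_diff_commute)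
qed

lemma A_comm_cong_0_iff:
  assumes "g \<in> carrier F" "h \<in> carrier F"
  shows "[A (comm F g h) = 0] (mod N) \<longleftrightarrow> [A g * (T h - 1) = A h * (T g - 1)] (mod N)"
proof -
  have "coprime (T g * T h) N" using T_coprime assms by simp
  then have "[A (comm F g h) = 0] (mod N) \<longleftrightarrow> [T g * T h * A (comm F g h) = 0] (mod N)"
    using cong_mult_lcancel[of "T g * T h" N "A (comm F g h)" 0] by simp
  also have "\<dots> \<longleftrightarrow> [A h * (T g - 1) - A g * (T h - 1) = 0] (mod N)"
    using A_comm[OF assms] by (meson cong_sym cong_trans)
  also have "\<dots> \<longleftrightarrow> [A g * (T h - 1) = A h * (T g - 1)] (mod N)"
    using cong_diff_iff_cong_0 cong_sym_eq by metis
  finally show ?thesis .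
qed

lemma A_comm_cong_0:
  assumes "g \<in> carrier F" "h \<in> carrier F" "N dvd A g * (T h - 1)" "N dvd A h * (T g - 1)"
  shows "[A (comm F g h) = 0] (mod N)"
  unfolding A_comm_cong_0_iff[OF assms(1,2)] using assms(3,4) by (simp add: cong_iff_dvd_diff)

lemma A_comm_swap_cong_0:
  assumes "g \<in> carrier F" "h \<in> carrier F"
  shows "[A (comm F h g) = 0] (mod N) \<longleftrightarrow> [A (comm F g h) = 0] (mod N)"
  using A_comm_cong_0_iff[OF assms] A_comm_cong_0_iff[OF assms(2,1)] by (simp add: cong_sym_eq)

lemma T_cong_1_of_A_comm_cong_0:
  assumes "g \<in> carrier F" "h \<in> carrier F" "[A (comm F g h) = 0] (mod N)"
    and "N dvd A h * (T g - 1)" "coprime (A g) N"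
  shows "[T h = 1] (mod N)"
proof -
  have "[A g * (T h - 1) = A h * (T g - 1)] (mod N)"
    using A_comm_cong_0_iff assms(1-3) by simp
  then have "N dvd A g * (T h - 1)"
    using assms(4) by (simp add: cong_dvd_iff)
  then have "N dvd T h - 1"
    using assms(5) by (simp add: coprime_commute coprime_dvd_mult_right_iff)
  then show ?thesis by (simp add: cong_iff_dvd_diff)
qed

lemma A_comm_dvd:
  assumes "g \<in> carrier F" "h \<in> carrier F" "a dvd N" "a dvd T g - 1" "a dvd T h - 1"
  shows "a dvd A (comm F g h)"
proof -
  have "[T g * T h * A (comm F g h) = A h * (T g - 1) - A g * (T h - 1)] (mod a)"
    using A_comm[OF assms(1,2)] assms(3) by (rule cong_dvd_modulus)
  moreover have "a dvd A h * (T g - 1) - A g * (T h - 1)"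
    using assms(4,5) by simp
  ultimately have "a dvd T g * T h * A (comm F g h)"
    by (simp add: cong_dvd_iff)
  moreover have "coprime a (T g * T h)"
    using T_coprime assms(1,2,3) coprime_divisors[of a N "T g * T h" "T g * T h"]
    by (simp add: coprime_commute)
  ultimately show ?thesis by (simp add: coprime_dvd_mult_right_iff)
qed

lemma T_lcomm: "g \<in> carrier F \<Longrightarrow> h \<in> carrier F \<Longrightarrow> 1 \<le> k \<Longrightarrow> [T (lcomm F g h k) = 1] (mod N)"
  by (cases k) (simp_all add: T_comm)

lemma A_lcomm_cong_0:
  assumes g: "g \<in> carrier F" and h: "h \<in> carrier F" and "2 \<le> k"
    and a: "a dvd N" "a dvd T g - 1" "a dvd T h - 1" and N: "N dvd a * (T h - 1)"
  shows "[A (lcomm F g h k) = 0] (mod N)"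
  using \<open>2 \<le> k\<close>
proof (induction k rule: dec_induct)
  have next_vanishes: "[A (lcomm F g h (Suc j)) = 0] (mod N)"
    if "1 \<le> j" "a dvd A (lcomm F g h j)" for j
  proof -
    have "N dvd A (lcomm F g h j) * (T h - 1)"
      using N that(2) by (meson dvd_trans mult_dvd_mono dvd_refl)
    moreover have "N dvd A h * (T (lcomm F g h j) - 1)"
      using T_lcomm[OF g h that(1)] by (simp add: cong_iff_dvd_diff)
    ultimately show ?thesis using A_comm_cong_0 g h by simp
  qed
  case base
  show ?case using next_vanishes[of 1] A_comm_dvd[OF g h a] by (simp add: numeral_2_eq_2)
  case (step k)
  then show ?case
    using next_vanishes[of k] \<open>a dvd N\<close> by (simp add: cong_0_iff) (meson dvd_trans)
qed

lemma T_pow: "g \<in> carrier F \<Longrightarrow> [T (g [^] m) = T g ^ m] (mod N)"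
proof (induction m)
  case 0
  then show ?case using T_one by simp
next
  case (Suc m)
  have "[T (g [^] Suc m) = T (g [^] m) * T g] (mod N)"
    using T_mult Suc.prems by simp
  also have "[T (g [^] m) * T g = T g ^ m * T g] (mod N)"
    using Suc by (simp add: cong_scalar_right)
  finally show ?case by (simp add: mult.commute)
qed

lemma A_pow: "g \<in> carrier F \<Longrightarrow> [A (g [^] m) = A g * (\<Sum>i<m. T g ^ i)] (mod N)"
proof (induction m)
  case 0
  then show ?case using A_one by simp
next
  case (Suc m)
  have "[A (g [^] Suc m) = A (g [^] m) + T (g [^] m) * A g] (mod N)"
    using A_mult Suc.prems by simp
  also have "[A (g [^] m) + T (g [^] m) * A g = A g * (\<Sum>i<m. T g ^ i) + T g ^ m * A g] (mod N)"
    using Suc T_pow by (simp add: cong_add cong_scalar_right)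
  also have "A g * (\<Sum>i<m. T g ^ i) + T g ^ m * A g = A g * (\<Sum>i<Suc m. T g ^ i)"
    by (simp add: algebra_simps)
  finally show ?case .
qed

lemma A_gprod:
  "set ws \<subseteq> carrier F \<Longrightarrow> \<forall>w\<in>set ws. [T w = 1] (mod N) \<Longrightarrow>
     [A (gprod F ws) = sum_list (map A ws)] (mod N)"
proof (induction ws)
  case Nil
  then show ?case using A_one by simp
next
  case (Cons w ws)
  then have "[A (w \<otimes> gprod F ws) = A w + T w * A (gprod F ws)] (mod N)"
    by (simp add: A_mult gprod_closed)
  also have "[A w + T w * A (gprod F ws) = A w + 1 * sum_list (map A ws)] (mod N)"
    using Cons by (intro cong_add[OF cong_refl] cong_mult) auto
  finally show ?case by simp
qed

lemma A_mult_gprod: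
  assumes "a \<in> carrier F" "set ws \<subseteq> carrier F" "\<forall>w\<in>set ws. [T w = 1] (mod N)"
  shows "[A (a \<otimes> gprod F ws) = A a + T a * sum_list (map A ws)] (mod N)"
proof -
  have "[A (a \<otimes> gprod F ws) = A a + T a * A (gprod F ws)] (mod N)"
    using assms by (simp add: A_mult gprod_closed)
  also have "[A a + T a * A (gprod F ws) = A a + T a * sum_list (map A ws)] (mod N)"
    using A_gprod assms by (simp add: cong_add cong_scalar_left)
  finally show ?thesis .
qed

lemma subgroup_T_cong_1: "subgroup {f \<in> carrier F. [T f = 1] (mod N)} F"
proof (rule subgroupI)
  fix a
  assume "a \<in> {f \<in> carrier F. [T f = 1] (mod N)}"
  then have a: "a \<in> carrier F" "[T a = 1] (mod N)" by auto
  have "[T (inv a) * 1 = T (inv a) * T a] (mod N)"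
    using a by (intro cong_scalar_left) (simp add: cong_sym)
  also have "[T (inv a) * T a = T \<one>] (mod N)"
    using T_mult[of "inv a" a] a by (simp add: cong_sym)
  also have "[T \<one> = 1] (mod N)" by (rule T_one)
  finally show "inv a \<in> {f \<in> carrier F. [T f = 1] (mod N)}" using a by simp
next
  fix a b
  assume "a \<in> {f \<in> carrier F. [T f = 1] (mod N)}" "b \<in> {f \<in> carrier F. [T f = 1] (mod N)}"
  then have a: "a \<in> carrier F" "[T a = 1] (mod N)" and b: "b \<in> carrier F" "[T b = 1] (mod N)"
    by auto
  have "[T (a \<otimes> b) = T a * T b] (mod N)" using T_mult a b by simp
  also have "[T a * T b = 1 * 1] (mod N)" using a(2) b(2) by (rule cong_mult)
  finally show "a \<otimes> b \<in> {f \<in> carrier F. [T f = 1] (mod N)}" using a b by simp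
qed (use T_one in auto)

lemma subgroup_A_cong_0: "subgroup {f \<in> carrier F. [A f = 0] (mod N) \<and> [T f = 1] (mod N)} F"
proof (rule subgroupI)
  fix a
  assume "a \<in> {f \<in> carrier F. [A f = 0] (mod N) \<and> [T f = 1] (mod N)}"
  then have a: "a \<in> carrier F" "[A a = 0] (mod N)" "[T a = 1] (mod N)" by auto
  then have "[T (inv a) = 1] (mod N)"
    using subgroup.m_inv_closed[OF subgroup_T_cong_1] by auto
  have "[A (inv a) + T (inv a) * 0 = A (inv a) + T (inv a) * A a] (mod N)"
    using a by (intro cong_add[OF cong_refl] cong_scalar_left) (simp add: cong_sym)
  also have "[A (inv a) + T (inv a) * A a = A \<one>] (mod N)"
    using A_mult[of "inv a" a] a by (simp add: cong_sym)
  also have "[A \<one> = 0] (mod N)" by (rule A_one)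
  finally show "inv a \<in> {f \<in> carrier F. [A f = 0] (mod N) \<and> [T f = 1] (mod N)}"
    using a \<open>[T (inv a) = 1] (mod N)\<close> by simp
next
  fix a b
  assume "a \<in> {f \<in> carrier F. [A f = 0] (mod N) \<and> [T f = 1] (mod N)}"
    and "b \<in> {f \<in> carrier F. [A f = 0] (mod N) \<and> [T f = 1] (mod N)}"
  then have a: "a \<in> carrier F" "[A a = 0] (mod N)" "[T a = 1] (mod N)"
    and b: "b \<in> carrier F" "[A b = 0] (mod N)" "[T b = 1] (mod N)"
    by auto
  have "[A (a \<otimes> b) = A a + T a * A b] (mod N)" using A_mult a b by simp
  also have "[A a + T a * A b = 0 + T a * 0] (mod N)"
    using a(2) cong_scalar_left[OF b(2)] by (rule cong_add)
  finally have "[A (a \<otimes> b) = 0] (mod N)" by simp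
  moreover have "[T (a \<otimes> b) = 1] (mod N)"
    using a b subgroup.m_closed[OF subgroup_T_cong_1] by auto
  ultimately show "a \<otimes> b \<in> {f \<in> carrier F. [A f = 0] (mod N) \<and> [T f = 1] (mod N)}"
    using a b by simp
qed (use A_one T_one in auto)

end

lemma (in crossed_hom_mod) second_derived_subset:
  assumes top: "topspace TF = carrier F"
    and A: "continuous_map TF (discrete_topology UNIV) A"
    and T: "continuous_map TF (discrete_topology UNIV) T"
    and H: "H \<subseteq> carrier F"
  shows "ccomm F TF (ccomm F TF H) \<subseteq> {f \<in> carrier F. [A f = 0] (mod N) \<and> [T f = 1] (mod N)}"
proof -
  let ?K1 = "{f \<in> carrier F. [T f = 1] (mod N)}"
  let ?K2 = "{f \<in> carrier F. [A f = 0] (mod N) \<and> [T f = 1] (mod N)}"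
  have "closedin TF {f \<in> topspace TF. T f \<in> {t. [t = 1] (mod N)}}"
    using closedin_continuous_map_preimage[OF T, of "{t. [t = 1] (mod N)}"] by simp
  then have K1: "closedin TF ?K1" using top by simp
  have "closedin TF {f \<in> topspace TF. A f \<in> {t. [t = 0] (mod N)}}"
    using closedin_continuous_map_preimage[OF A, of "{t. [t = 0] (mod N)}"] by simp
  then have "closedin TF ({f \<in> topspace TF. A f \<in> {t. [t = 0] (mod N)}} \<inter> ?K1)"
    using K1 by blast
  moreover have "{f \<in> topspace TF. A f \<in> {t. [t = 0] (mod N)}} \<inter> ?K1 = ?K2"
    using top by auto
  ultimately have K2: "closedin TF ?K2" by simp
  define C where "C = ccomm F TF H"
  have "C \<subseteq> ?K1"
    unfolding C_def ccomm_def
    by (rule closed_gen_subset[OF is_group subgroup_T_cong_1 K1]) (use H T_comm in auto)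
  show ?thesis
    unfolding C_def[symmetric] ccomm_def[of F TF C]
  proof (intro closed_gen_subset[OF is_group subgroup_A_cong_0 K2] subsetI)
    fix z
    assume "z \<in> {comm F a b |a b. a \<in> C \<and> b \<in> C}"
    then obtain a b where z: "z = comm F a b" and "a \<in> ?K1" "b \<in> ?K1"
      using \<open>C \<subseteq> ?K1\<close> by blast
    then have a: "a \<in> carrier F" "N dvd T a - 1" and b: "b \<in> carrier F" "N dvd T b - 1"
      by (auto simp: cong_iff_dvd_diff)
    have "[A (comm F a b) = 0] (mod N)"
      using a b by (intro A_comm_cong_0) simp_all
    then show "z \<in> ?K2" using z a b T_comm by simp
  qed
qed

lemma crossed_hom_mod_comp_hom:
  assumes "crossed_hom_mod G N A T" "group F" "\<pi> \<in> hom F G"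
  shows "crossed_hom_mod F N (\<lambda>f. A (\<pi> f)) (\<lambda>f. T (\<pi> f))"
proof -
  interpret G: crossed_hom_mod G N A T by fact
  show ?thesis
    unfolding crossed_hom_mod_def crossed_hom_mod_axioms_def
    using assms(2) hom_mult[OF assms(3)] hom_in_carrier[OF assms(3)]
    by (auto intro: G.A_mult G.T_mult G.T_coprime)
qed

section \<open>Cocycles of the presented Kummerian pair\<close>

locale presented_kummerian_pair =
  fixes p d n q \<nu> :: nat
    and F :: "'f monoid" and TF :: "'f topology" and x :: "nat \<Rightarrow> 'f"
    and G :: "'g monoid" and TG :: "'g topology" and \<pi> :: "'f \<Rightarrow> 'g"
    and r :: "nat \<Rightarrow> 'f" and s :: 'f and \<theta> :: "'g \<Rightarrow> nat \<Rightarrow> int"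
  assumes prime_p: "Factorial_Ring.prime p"
    and odd_d: "odd d" and d_ge_3: "d \<ge> 3" and n_ge_2: "n \<ge> 2"
    and free: "free_pro_p p d F TF x"
    and pro_p_G: "pro_p_group p G TG"
    and hom_\<pi>: "\<pi> \<in> hom F G" and continuous_\<pi>: "continuous_map TF TG \<pi>"
    and surj_\<pi>: "\<pi> ` carrier F = carrier G"
    and r_carrier: "\<forall>i\<in>{0..\<nu>}. r i \<in> carrier F"
    and kernel_\<pi>: "kernel F G \<pi> = closed_normal_gen F TF (r ` {0..\<nu>})"
    and r_frattini: "r ` {0..\<nu>} \<subseteq> frattini p F TF"
    and s_mem: "s \<in> ccomm F TF (ccomm F TF (closed_gen F TF (x ` {3..d})))"
    and r0_eq: "r 0 = x 1 [^]\<^bsub>F\<^esub> q \<otimes>\<^bsub>F\<^esub> lcomm F (x 1) (x 2) n \<otimes>\<^bsub>F\<^esub> comm F (x 2) (x 3)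
              \<otimes>\<^bsub>F\<^esub> gprod F (map (\<lambda>j. comm F (x (2 * j)) (x (2 * j + 1))) [2..<(d + 1) div 2])
              \<otimes>\<^bsub>F\<^esub> s"
    and orientation: "orientation p G TG \<theta>"
    and torsion_free: "torsion_free_pair p G \<theta>"
    and kummerian: "kummerian p G TG \<theta>"
begin

lemma pro_p_F: "pro_p_group p F TF"
  using free by (simp add: free_pro_p_def)

lemma group_F: "group F"
  using pro_p_F by (simp add: pro_p_group_def topgroup_def)

lemma group_G: "group G"
  using pro_p_G by (simp add: pro_p_group_def topgroup_def)

lemma topspace_F: "topspace TF = carrier F"
  using pro_p_F by (simp add: pro_p_group_def topgroup_def)

lemma topspace_G: "topspace TG = carrier G"
  using pro_p_G by (simp add: pro_p_group_def topgroup_def)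

lemma x_carrier: "i \<in> {1..d} \<Longrightarrow> x i \<in> carrier F"
  using free by (simp add: free_pro_p_def)

lemma group_hom_\<pi>: "group_hom F G \<pi>"
  using group_F group_G hom_\<pi> by (simp add: group_hom_def group_hom_axioms_def)

lemma \<pi>_carrier: "f \<in> carrier F \<Longrightarrow> \<pi> f \<in> carrier G"
  using hom_\<pi> by (simp add: hom_in_carrier)

lemma quotient_map_\<pi>: "quotient_map TF TG \<pi>"
  using pro_p_F pro_p_G continuous_\<pi> surj_\<pi> topspace_F topspace_G
  by (intro continuous_imp_quotient_map) (simp_all add: pro_p_group_def)

lemma one_less_p: "1 < p"
  using prime_p by (rule prime_gt_1_nat)

lemma theta_range: "g \<in> carrier G \<Longrightarrow> 0 \<le> \<theta> g k \<and> \<theta> g k < int p ^ k"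
  using orientation by (simp add: orientation_def)

lemma theta_level_cong:
  assumes "g \<in> carrier G" "m \<le> k"
  shows "[\<theta> g k = \<theta> g m] (mod int p ^ m)"
  using assms(2)
proof (induction k rule: dec_induct)
  case (step j)
  have "[\<theta> g (Suc j) = \<theta> g j] (mod int p ^ j)"
    using orientation assms(1) by (simp add: orientation_def cong_def)
  then have "[\<theta> g (Suc j) = \<theta> g j] (mod int p ^ m)"
    using step.hyps(1) by (rule cong_dvd_modulus[OF _ le_imp_power_dvd])
  then show ?case using step.IH by (rule cong_trans)
qed simp

lemma theta_cong_1_of_eq_1:
  "g \<in> carrier G \<Longrightarrow> \<theta> g m = 1 \<Longrightarrow> m \<le> k \<Longrightarrow> [\<theta> g k = 1] (mod int p ^ m)"
  by (metis theta_level_cong)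

lemma theta_cong_1: "g \<in> carrier G \<Longrightarrow> 1 \<le> k \<Longrightarrow> [\<theta> g k = 1] (mod int p)"
  using theta_cong_1_of_eq_1[of g 1 k] orientation by (simp add: orientation_def)

lemma theta_cong_1_mod_4: "g \<in> carrier G \<Longrightarrow> p = 2 \<Longrightarrow> 2 \<le> k \<Longrightarrow> [\<theta> g k = 1] (mod 4)"
  using theta_cong_1_of_eq_1[of g 2 k] torsion_free by (simp add: torsion_free_pair_def)

lemma theta_eq_1_of_cong_1:
  assumes "g \<in> carrier G" "1 \<le> k" "[\<theta> g k = 1] (mod int p ^ k)"
  shows "\<theta> g k = 1"
proof -
  have "1 < int p ^ k" using one_less_p assms(2) by simp
  then show ?thesis
    using cong_less_imp_eq_int[OF _ _ _ _ assms(3)] theta_range[OF assms(1), of k] by simp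
qed

lemma cocycle_crossed_hom_mod:
  assumes "cocycle p G TG \<theta> k c" "1 \<le> k"
  shows "crossed_hom_mod F (int p ^ k) (\<lambda>f. c (\<pi> f)) (\<lambda>f. \<theta> (\<pi> f) k)"
proof -
  have "coprime (\<theta> g k) (int p ^ k)" if "g \<in> carrier G" for g
    using theta_cong_1[OF that assms(2)] by (rule coprime_power_if_cong_1)
  then have "crossed_hom_mod G (int p ^ k) c (\<lambda>g. \<theta> g k)"
    unfolding crossed_hom_mod_def crossed_hom_mod_axioms_def
    using group_G assms(1) orientation by (simp add: cocycle_def orientation_def cong_def)
  then show ?thesis using group_F hom_\<pi> by (rule crossed_hom_mod_comp_hom)
qed

lemma cocycle_continuous:
  "cocycle p G TG \<theta> k c \<Longrightarrow> continuous_map TG (discrete_topology UNIV) c"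
  by (simp add: cocycle_def continuous_map_discrete_UNIV_iff topspace_G)

lemma theta_continuous: "continuous_map TG (discrete_topology UNIV) (\<lambda>g. \<theta> g k)"
  using orientation by (simp add: orientation_def continuous_map_discrete_UNIV_iff topspace_G)

lemma exists_zmod_hom:
  assumes "j \<in> {1..d}"
  obtains \<phi>\<^sub>0 where "\<phi>\<^sub>0 \<in> hom F (zmod_group p)"
    and "continuous_map TF (discrete_topology {..<p}) \<phi>\<^sub>0"
    and "\<forall>i\<in>{1..d}. \<phi>\<^sub>0 (x i) = (if i = j then 1 else 0)"
proof -
  have "group (zmod_group p) \<and> finite (carrier (zmod_group p)) \<and>
      (\<exists>e. card (carrier (zmod_group p)) = p ^ e) \<and>
      (\<forall>i\<in>{1..d}. (if i = j then 1 else 0) \<in> carrier (zmod_group p))"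
    using comm_group_zmod_group one_less_p by (auto simp: comm_group_def intro: exI[of _ 1])
  then show ?thesis
    using free[unfolded free_pro_p_def, THEN conjunct2, THEN conjunct2, rule_format,
        of "zmod_group p" "\<lambda>i. if i = j then 1 else 0"] that
    by auto
qed

lemma kernel_\<pi>_subset_zmod_kernel:
  assumes "\<phi>\<^sub>0 \<in> hom F (zmod_group p)" "continuous_map TF (discrete_topology {..<p}) \<phi>\<^sub>0"
  shows "kernel F G \<pi> \<subseteq> kernel F (zmod_group p) \<phi>\<^sub>0"
proof -
  interpret \<phi>\<^sub>0: group_hom F "zmod_group p" \<phi>\<^sub>0
    using group_F comm_group_zmod_group one_less_p assms(1)
    by (simp add: group_hom_def group_hom_axioms_def comm_group_def)
  have "closedin TF {f \<in> topspace TF. \<phi>\<^sub>0 f \<in> {0}}"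
    using closedin_continuous_map_preimage[OF assms(2), of "{0}"] one_less_p by simp
  then have closed: "closedin TF (kernel F (zmod_group p) \<phi>\<^sub>0)"
    by (simp add: kernel_def topspace_F zmod_group_def)
  show ?thesis
    unfolding kernel_\<pi>
    using group_F \<phi>\<^sub>0.normal_kernel closed r_frattini comm_group_zmod_group one_less_p
      frattini_subset_kernel[OF \<phi>\<^sub>0.group_hom_axioms _ order_zmod_group closed]
    by (intro closed_normal_gen_subset) auto
qed

lemma cocycle_of_zmod_hom:
  assumes hom: "\<phi>\<^sub>0 \<in> hom F (zmod_group p)"
    and cont: "continuous_map TF (discrete_topology {..<p}) \<phi>\<^sub>0"
  shows "\<exists>\<phi>. cocycle p G TG \<theta> 1 \<phi> \<and> (\<forall>f\<in>carrier F. \<phi> (\<pi> f) = int (\<phi>\<^sub>0 f))"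
proof -
  interpret \<phi>\<^sub>0: group_hom F "zmod_group p" \<phi>\<^sub>0
    using group_F comm_group_zmod_group one_less_p hom
    by (simp add: group_hom_def group_hom_axioms_def comm_group_def)
  define \<phi> where "\<phi> g = int (\<phi>\<^sub>0 (inv_into (carrier F) \<pi> g))" for g
  have \<phi>_\<pi>: "\<phi> (\<pi> f) = int (\<phi>\<^sub>0 f)" if "f \<in> carrier F" for f
    unfolding \<phi>_def using that kernel_\<pi>_subset_zmod_kernel[OF hom cont]
    by (intro arg_cong[where f = int] \<phi>\<^sub>0.eq_if_kernel_subset[OF group_hom_\<pi>])
      (auto intro: inv_into_into f_inv_into_f)
  have "continuous_map TF (discrete_topology UNIV) (\<phi> \<circ> \<pi>)"
  proof (rule continuous_map_eq)
    show "continuous_map TF (discrete_topology UNIV) (int \<circ> \<phi>\<^sub>0)"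
      using cont by (intro continuous_map_compose) auto
  qed (simp add: \<phi>_\<pi> topspace_F)
  then have "continuous_map TG (discrete_topology UNIV) \<phi>"
    by (rule continuous_compose_quotient_map[OF quotient_map_\<pi>])
  moreover have "0 \<le> \<phi> g \<and> \<phi> g < int p" if g: "g \<in> carrier G" for g
  proof -
    obtain f where "f \<in> carrier F" "g = \<pi> f"
      using g surj_\<pi> by auto
    then show ?thesis using \<phi>_\<pi> \<phi>\<^sub>0.hom_closed by fastforce
  qed
  moreover have "\<phi> (g \<otimes>\<^bsub>G\<^esub> h) = (\<phi> g + \<phi> h) mod int p"
    if gh: "g \<in> carrier G" "h \<in> carrier G" for g h
  proof -
    obtain f f' where f: "f \<in> carrier F" "f' \<in> carrier F" "g = \<pi> f" "h = \<pi> f'"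
      using gh surj_\<pi> by (metis imageE)
    then have "\<phi> (g \<otimes>\<^bsub>G\<^esub> h) = \<phi> (\<pi> (f \<otimes>\<^bsub>F\<^esub> f'))"
      using group_hom.hom_mult[OF group_hom_\<pi>] by simp
    also have "\<dots> = int (\<phi>\<^sub>0 (f \<otimes>\<^bsub>F\<^esub> f'))"
      using f by (simp add: \<phi>_\<pi>)
    also have "\<dots> = (\<phi> g + \<phi> h) mod int p"
      using f \<phi>_\<pi> by (simp add: zmod_group_def zmod_int)
    finally show ?thesis .
  qed
  ultimately have "cocycle p G TG \<theta> 1 \<phi>"
    using orientation
    by (simp add: cocycle_def orientation_def continuous_map_discrete_UNIV_iff topspace_G)
  then show ?thesis using \<phi>_\<pi> by blast
qed

lemma exists_mod_p_cocycle:
  assumes "j \<in> {1..d}"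
  shows "\<exists>\<phi>. cocycle p G TG \<theta> 1 \<phi> \<and> (\<forall>i\<in>{1..d}. \<phi> (\<pi> (x i)) = (if i = j then 1 else 0))"
proof -
  obtain \<phi>\<^sub>0 where hom: "\<phi>\<^sub>0 \<in> hom F (zmod_group p)"
    and cont: "continuous_map TF (discrete_topology {..<p}) \<phi>\<^sub>0"
    and val: "\<forall>i\<in>{1..d}. \<phi>\<^sub>0 (x i) = (if i = j then 1 else 0)"
    using exists_zmod_hom[OF assms] .
  obtain \<phi> where "cocycle p G TG \<theta> 1 \<phi>" "\<forall>f\<in>carrier F. \<phi> (\<pi> f) = int (\<phi>\<^sub>0 f)"
    using cocycle_of_zmod_hom[OF hom cont] by blast
  then show ?thesis using val x_carrier by auto
qed

lemma exists_cocycle_lift: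
  assumes "j \<in> {1..d}" "1 \<le> k"
  shows "\<exists>c. cocycle p G TG \<theta> k c \<and> (\<forall>i\<in>{1..d}. [c (\<pi> (x i)) = (if i = j then 1 else 0)] (mod p))"
proof -
  obtain \<phi> where \<phi>: "cocycle p G TG \<theta> 1 \<phi>" "\<forall>i\<in>{1..d}. \<phi> (\<pi> (x i)) = (if i = j then 1 else 0)"
    using exists_mod_p_cocycle[OF assms(1)] by blast
  then obtain c b where c: "cocycle p G TG \<theta> k c" and "coboundary p G \<theta> 1 b"
    and cb: "\<forall>g\<in>carrier G. c g mod int p = (\<phi> g + b g) mod int p"
    using kummerian assms(2) unfolding kummerian_def by blast
  then obtain a where a: "\<forall>g\<in>carrier G. b g = ((\<theta> g 1 - 1) * a) mod int p ^ 1"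
    unfolding coboundary_def by blast
  have "\<forall>g\<in>carrier G. \<theta> g 1 = 1"
    using orientation unfolding orientation_def by blast
  then have "b g = 0" if "g \<in> carrier G" for g
    using a that by simp
  then have "[c (\<pi> (x i)) = (if i = j then 1 else 0)] (mod p)" if "i \<in> {1..d}" for i
    using that cb \<phi>(2) x_carrier \<pi>_carrier by (simp add: cong_def)
  then show ?thesis using c by blast
qed

lemma cocycle_vanishes_at_s:
  assumes "cocycle p G TG \<theta> k c" "1 \<le> k"
  shows "[c (\<pi> s) = 0] (mod int p ^ k)" "[\<theta> (\<pi> s) k = 1] (mod int p ^ k)"
proof -
  interpret crossed_hom_mod F "int p ^ k" "\<lambda>f. c (\<pi> f)" "\<lambda>f. \<theta> (\<pi> f) k"
    using assms by (rule cocycle_crossed_hom_mod)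
  have "continuous_map TF (discrete_topology UNIV) (\<lambda>f. c (\<pi> f))"
    using continuous_map_compose[OF continuous_\<pi> cocycle_continuous[OF assms(1)]]
    by (simp add: o_def)
  moreover have "continuous_map TF (discrete_topology UNIV) (\<lambda>f. \<theta> (\<pi> f) k)"
    using continuous_map_compose[OF continuous_\<pi> theta_continuous] by (simp add: o_def)
  moreover have "closed_gen F TF (x ` {3..d}) \<subseteq> carrier F"
    unfolding closed_gen_def by (metis closure_of_subset_topspace topspace_F)
  ultimately have "s \<in> {f \<in> carrier F. [c (\<pi> f) = 0] (mod int p ^ k) \<and> [\<theta> (\<pi> f) k = 1] (mod int p ^ k)}"
    using second_derived_subset[OF topspace_F] s_mem by blast
  then show "[c (\<pi> s) = 0] (mod int p ^ k)" "[\<theta> (\<pi> s) k = 1] (mod int p ^ k)"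
    by simp_all
qed

lemma s_carrier: "s \<in> carrier F"
proof -
  have "ccomm F TF (ccomm F TF (closed_gen F TF (x ` {3..d}))) \<subseteq> topspace TF"
    unfolding ccomm_def[of F TF "ccomm F TF _"] closed_gen_def by (rule closure_of_subset_topspace)
  then show ?thesis using s_mem topspace_F by blast
qed

lemma \<pi>_r0_eq_one: "\<pi> (r 0) = \<one>\<^bsub>G\<^esub>"
proof -
  have "r 0 \<in> closed_normal_gen F TF (r ` {0..\<nu>})"
    using group_F topspace_F r_carrier by (intro mem_closed_normal_gen) auto
  then have "r 0 \<in> kernel F G \<pi>"
    using kernel_\<pi> by simp
  then show ?thesis by (simp add: kernel_def)
qed

definition pair_comm :: "nat \<Rightarrow> 'f" where
  "pair_comm j = comm F (x (2 * j)) (x (2 * j + 1))"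

lemma pair_index_bounds: "j \<in> {1..<(d + 1) div 2} \<Longrightarrow> 2 * j \<in> {2..d} \<and> 2 * j + 1 \<in> {2..d}"
proof -
  assume j: "j \<in> {1..<(d + 1) div 2}"
  obtain m where d: "d = 2 * m + 1" using odd_d by (rule oddE)
  then have "(d + 1) div 2 = m + 1" by simp
  with j d show ?thesis by auto
qed

lemma pair_comm_carrier: "j \<in> {1..<(d + 1) div 2} \<Longrightarrow> pair_comm j \<in> carrier F"
  using pair_index_bounds x_carrier group.comm_closed[OF group_F] by (simp add: pair_comm_def)

lemma r0_eq_gprod:
  "r 0 = x 1 [^]\<^bsub>F\<^esub> q \<otimes>\<^bsub>F\<^esub>
     gprod F (lcomm F (x 1) (x 2) n # map pair_comm [1..<(d + 1) div 2] @ [s])"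
proof -
  interpret group F by (rule group_F)
  have "1 < (d + 1) div 2"
    using d_ge_3 by linarith
  then have "[1..<(d + 1) div 2] = 1 # [2..<(d + 1) div 2]"
    by (simp add: upt_conv_Cons numeral_2_eq_2)
  moreover have P: "set (map pair_comm [2..<(d + 1) div 2]) \<subseteq> carrier F"
    using pair_comm_carrier by auto
  ultimately have "gprod F (lcomm F (x 1) (x 2) n # map pair_comm [1..<(d + 1) div 2] @ [s]) =
      lcomm F (x 1) (x 2) n \<otimes>\<^bsub>F\<^esub>
        (pair_comm 1 \<otimes>\<^bsub>F\<^esub> (gprod F (map pair_comm [2..<(d + 1) div 2]) \<otimes>\<^bsub>F\<^esub> s))"
    using s_carrier by (simp add: gprod_append)
  moreover have "x 1 \<in> carrier F" "x 2 \<in> carrier F" "x 3 \<in> carrier F"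
    using x_carrier d_ge_3 by auto
  ultimately show ?thesis
    using P s_carrier gprod_closed[OF P] by (simp add: r0_eq m_assoc pair_comm_def[abs_def])
qed

lemma relator_cong:
  assumes "cocycle p G TG \<theta> k c" "1 \<le> k"
  shows "[c (\<pi> (x 1 [^]\<^bsub>F\<^esub> q)) + \<theta> (\<pi> (x 1 [^]\<^bsub>F\<^esub> q)) k *
      (c (\<pi> (lcomm F (x 1) (x 2) n)) + (\<Sum>j\<in>{1..<(d + 1) div 2}. c (\<pi> (pair_comm j)))) = 0]
    (mod int p ^ k)"
proof -
  interpret crossed_hom_mod F "int p ^ k" "\<lambda>f. c (\<pi> f)" "\<lambda>f. \<theta> (\<pi> f) k"
    using assms by (rule cocycle_crossed_hom_mod)
  let ?X = "x 1 [^]\<^bsub>F\<^esub> q" and ?L = "lcomm F (x 1) (x 2) n"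
  let ?ws = "?L # map pair_comm [1..<(d + 1) div 2] @ [s]"
  let ?\<Sigma> = "\<Sum>j\<in>{1..<(d + 1) div 2}. c (\<pi> (pair_comm j))"
  have x12: "x 1 \<in> carrier F" "x 2 \<in> carrier F"
    using x_carrier d_ge_3 by auto
  have "set ?ws \<subseteq> carrier F"
    using x12 s_carrier pair_comm_carrier by auto
  moreover have "[\<theta> (\<pi> (pair_comm j)) k = 1] (mod int p ^ k)" if "j \<in> {1..<(d + 1) div 2}" for j
    using pair_index_bounds[OF that] x_carrier T_comm by (simp add: pair_comm_def)
  then have "\<forall>w\<in>set ?ws. [\<theta> (\<pi> w) k = 1] (mod int p ^ k)"
    using T_lcomm[OF x12] n_ge_2 cocycle_vanishes_at_s(2)[OF assms] by auto
  moreover have "sum_list (map (\<lambda>f. c (\<pi> f)) ?ws) = c (\<pi> ?L) + ?\<Sigma> + c (\<pi> s)"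
    by (simp add: interv_sum_list_conv_sum_set_nat o_def add.assoc)
  ultimately have r0: "[c (\<pi> (r 0)) = c (\<pi> ?X) + \<theta> (\<pi> ?X) k * (c (\<pi> ?L) + ?\<Sigma> + c (\<pi> s))]
      (mod int p ^ k)"
    using A_mult_gprod[of ?X ?ws] x12 r0_eq_gprod by (simp add: add.assoc)
  have "[c (\<pi> (r 0)) = 0] (mod int p ^ k)"
    using A_one \<pi>_r0_eq_one group_hom.hom_one[OF group_hom_\<pi>] by simp
  then have "[c (\<pi> ?X) + \<theta> (\<pi> ?X) k * (c (\<pi> ?L) + ?\<Sigma> + c (\<pi> s)) = 0] (mod int p ^ k)"
    using cong_trans[OF cong_sym[OF r0]] by blast
  moreover have "[c (\<pi> ?X) + \<theta> (\<pi> ?X) k * (c (\<pi> ?L) + ?\<Sigma> + c (\<pi> s))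
      = c (\<pi> ?X) + \<theta> (\<pi> ?X) k * (c (\<pi> ?L) + ?\<Sigma> + 0)] (mod int p ^ k)"
    using cocycle_vanishes_at_s[OF assms]
    by (intro cong_add[OF cong_refl] cong_scalar_left cong_add[OF cong_refl]) simp
  ultimately show ?thesis
    using cong_trans[OF cong_sym] by fastforce
qed

lemma theta_generator_dvd:
  assumes "\<forall>i\<in>{2..d}. \<theta> (\<pi> (x i)) E = 1" "i \<in> {2..d}" "E \<le> k"
  shows "int p ^ E dvd \<theta> (\<pi> (x i)) k - 1"
  using assms theta_cong_1_of_eq_1 x_carrier \<pi>_carrier by (simp add: cong_iff_dvd_diff)

lemma lcomm_cong_0:
  assumes "cocycle p G TG \<theta> (Suc E) c" "\<forall>i\<in>{2..d}. \<theta> (\<pi> (x i)) E = 1"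
  shows "[c (\<pi> (lcomm F (x 1) (x 2) n)) = 0] (mod int p ^ Suc E)"
proof -
  interpret crossed_hom_mod F "int p ^ Suc E" "\<lambda>f. c (\<pi> f)" "\<lambda>f. \<theta> (\<pi> f) (Suc E)"
    using assms(1) by (rule cocycle_crossed_hom_mod) simp
  have x: "x 1 \<in> carrier F" "x 2 \<in> carrier F"
    using x_carrier d_ge_3 by auto
  have "int p dvd \<theta> (\<pi> f) (Suc E) - 1" if "f \<in> carrier F" for f
    using theta_cong_1[OF \<pi>_carrier[OF that]] by (simp add: cong_iff_dvd_diff)
  moreover have "int p ^ E dvd \<theta> (\<pi> (x 2)) (Suc E) - 1"
    using theta_generator_dvd[OF assms(2)] d_ge_3 by simp
  ultimately show ?thesis
    using A_lcomm_cong_0[OF x n_ge_2, of "int p"] x by simp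
qed

lemma pair_comm_cong_0:
  assumes "cocycle p G TG \<theta> (Suc E) c" "\<forall>i\<in>{2..d}. \<theta> (\<pi> (x i)) E = 1"
    and "j \<in> {1..<(d + 1) div 2}"
    and "int p dvd c (\<pi> (x (2 * j)))" "int p dvd c (\<pi> (x (2 * j + 1)))"
  shows "[c (\<pi> (pair_comm j)) = 0] (mod int p ^ Suc E)"
proof -
  interpret crossed_hom_mod F "int p ^ Suc E" "\<lambda>f. c (\<pi> f)" "\<lambda>f. \<theta> (\<pi> f) (Suc E)"
    using assms(1) by (rule cocycle_crossed_hom_mod) simp
  have "int p ^ E dvd \<theta> (\<pi> (x i)) (Suc E) - 1" if "i \<in> {2 * j, 2 * j + 1}" for i
    using theta_generator_dvd[OF assms(2)] pair_index_bounds[OF assms(3)] that by auto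
  then have "int p * int p ^ E dvd c (\<pi> (x (2 * j))) * (\<theta> (\<pi> (x (2 * j + 1))) (Suc E) - 1)"
    and "int p * int p ^ E dvd c (\<pi> (x (2 * j + 1))) * (\<theta> (\<pi> (x (2 * j))) (Suc E) - 1)"
    using assms(4,5) by (simp_all add: mult_dvd_mono)
  then show ?thesis
    using A_comm_cong_0 pair_index_bounds[OF assms(3)] x_carrier by (simp add: pair_comm_def)
qed

lemma x1_power_cong_0:
  assumes "cocycle p G TG \<theta> (Suc E) c" "1 \<le> E" "int p dvd c (\<pi> (x 1))"
    and "q = 0 \<or> (\<exists>f\<ge>E. q = p ^ f)"
  shows "[c (\<pi> (x 1 [^]\<^bsub>F\<^esub> q)) = 0] (mod int p ^ Suc E)"
proof -
  interpret crossed_hom_mod F "int p ^ Suc E" "\<lambda>f. c (\<pi> f)" "\<lambda>f. \<theta> (\<pi> f) (Suc E)"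
    using assms(1) by (rule cocycle_crossed_hom_mod) simp
  from assms(4) show ?thesis
  proof
    assume "q = 0"
    then show ?thesis using A_one by simp
  next
    assume "\<exists>f\<ge>E. q = p ^ f"
    then obtain f where "E \<le> f" "q = p ^ f" by blast
    have x1: "x 1 \<in> carrier F" "\<pi> (x 1) \<in> carrier G"
      using x_carrier \<pi>_carrier d_ge_3 by auto
    let ?t = "\<theta> (\<pi> (x 1)) (Suc E)"
    have "int p ^ f dvd (\<Sum>i<p ^ f. ?t ^ i)"
      using prime_power_exactly_dvd_geometric_sum[OF prime_p theta_cong_1[OF x1(2)]]
        theta_cong_1_mod_4[OF x1(2)] assms(2) by simp
    then have "int p ^ E dvd (\<Sum>i<q. ?t ^ i)"
      using \<open>E \<le> f\<close> \<open>q = p ^ f\<close> le_imp_power_dvd dvd_trans by blast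
    then have "int p * int p ^ E dvd c (\<pi> (x 1)) * (\<Sum>i<q. ?t ^ i)"
      by (rule mult_dvd_mono[OF assms(3)])
    then show ?thesis
      using A_pow[OF x1(1), of q] by (simp add: cong_0_iff cong_dvd_iff)
  qed
qed

lemma relator_cong_pairs:
  assumes "cocycle p G TG \<theta> (Suc E) c" "\<forall>i\<in>{2..d}. \<theta> (\<pi> (x i)) E = 1"
  shows "[c (\<pi> (x 1 [^]\<^bsub>F\<^esub> q)) + \<theta> (\<pi> (x 1 [^]\<^bsub>F\<^esub> q)) (Suc E) *
      (\<Sum>j\<in>{1..<(d + 1) div 2}. c (\<pi> (pair_comm j))) = 0] (mod int p ^ Suc E)"
proof -
  let ?X = "x 1 [^]\<^bsub>F\<^esub> q" and ?L = "lcomm F (x 1) (x 2) n"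
  let ?\<Sigma> = "\<Sum>j\<in>{1..<(d + 1) div 2}. c (\<pi> (pair_comm j))"
  have "[c (\<pi> ?L) + ?\<Sigma> = 0 + ?\<Sigma>] (mod int p ^ Suc E)"
    using lcomm_cong_0[OF assms] by (rule cong_add) simp
  then have "[c (\<pi> ?X) + \<theta> (\<pi> ?X) (Suc E) * (c (\<pi> ?L) + ?\<Sigma>)
      = c (\<pi> ?X) + \<theta> (\<pi> ?X) (Suc E) * (0 + ?\<Sigma>)] (mod int p ^ Suc E)"
    by (intro cong_add[OF cong_refl] cong_scalar_left)
  from cong_trans[OF cong_sym[OF this] relator_cong[OF assms(1)]] show ?thesis
    by simp
qed

lemma pair_comm_cong_0_of_others:
  assumes "cocycle p G TG \<theta> (Suc E) c" "1 \<le> E" "\<forall>i\<in>{2..d}. \<theta> (\<pi> (x i)) E = 1"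
    and "q = 0 \<or> (\<exists>f\<ge>E. q = p ^ f)" "int p dvd c (\<pi> (x 1))" "j \<in> {1..<(d + 1) div 2}"
    and "\<forall>j'\<in>{1..<(d + 1) div 2} - {j}. [c (\<pi> (pair_comm j')) = 0] (mod int p ^ Suc E)"
  shows "[c (\<pi> (pair_comm j)) = 0] (mod int p ^ Suc E)"
proof -
  interpret crossed_hom_mod F "int p ^ Suc E" "\<lambda>f. c (\<pi> f)" "\<lambda>f. \<theta> (\<pi> f) (Suc E)"
    using assms(1) by (rule cocycle_crossed_hom_mod) simp
  let ?X = "x 1 [^]\<^bsub>F\<^esub> q"
  let ?\<Sigma> = "\<Sum>j\<in>{1..<(d + 1) div 2}. c (\<pi> (pair_comm j))"
  have "int p ^ Suc E dvd c (\<pi> ?X) + \<theta> (\<pi> ?X) (Suc E) * ?\<Sigma>"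
    using relator_cong_pairs[OF assms(1,3)] by (simp add: cong_0_iff)
  moreover have "int p ^ Suc E dvd c (\<pi> ?X)"
    using x1_power_cong_0[OF assms(1,2,5,4)] by (simp add: cong_0_iff)
  ultimately have "int p ^ Suc E dvd \<theta> (\<pi> ?X) (Suc E) * ?\<Sigma>"
    by (simp add: dvd_add_right_iff)
  moreover have "coprime (int p ^ Suc E) (\<theta> (\<pi> ?X) (Suc E))"
    using T_coprime x_carrier d_ge_3 by (simp add: coprime_commute)
  ultimately have "int p ^ Suc E dvd ?\<Sigma>"
    by (simp add: coprime_dvd_mult_right_iff)
  moreover have "?\<Sigma> = c (\<pi> (pair_comm j)) + (\<Sum>j'\<in>{1..<(d + 1) div 2} - {j}. c (\<pi> (pair_comm j')))"
    using assms(6) by (simp add: sum.remove)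
  moreover have "int p ^ Suc E dvd (\<Sum>j'\<in>{1..<(d + 1) div 2} - {j}. c (\<pi> (pair_comm j')))"
    using assms(7) by (intro dvd_sum) (simp add: cong_0_iff)
  ultimately show ?thesis
    by (simp add: cong_0_iff dvd_add_left_iff)
qed

lemma pair_partner:
  assumes "i \<in> {2..d}"
  obtains j i' where "j \<in> {1..<(d + 1) div 2}" "i' \<in> {2..d}" "i' \<noteq> i" "{2 * j, 2 * j + 1} = {i, i'}"
proof -
  obtain m where d: "d = 2 * m + 1" using odd_d by (rule oddE)
  show ?thesis
  proof (cases "even i")
    case True
    then obtain j where "i = 2 * j" by blast
    then show ?thesis using that[of j "i + 1"] assms d by auto
  next
    case False
    then obtain j where "i = 2 * j + 1" by (rule oddE)
    then show ?thesis using that[of j "i - 1"] assms d by auto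
  qed
qed

lemma theta_generators_Suc:
  assumes "1 \<le> E" "\<forall>i\<in>{2..d}. \<theta> (\<pi> (x i)) E = 1" "q = 0 \<or> (\<exists>f\<ge>E. q = p ^ f)"
    and "i \<in> {2..d}"
  shows "\<theta> (\<pi> (x i)) (Suc E) = 1"
proof -
  obtain j i' where j: "j \<in> {1..<(d + 1) div 2}" and i': "i' \<in> {2..d}" "i' \<noteq> i"
    and ji: "{2 * j, 2 * j + 1} = {i, i'}"
    using pair_partner[OF assms(4)] .
  obtain c where c: "cocycle p G TG \<theta> (Suc E) c"
    and val: "\<forall>k\<in>{1..d}. [c (\<pi> (x k)) = (if k = i' then 1 else 0)] (mod p)"
    using exists_cocycle_lift[of i' "Suc E"] i' by auto
  interpret crossed_hom_mod F "int p ^ Suc E" "\<lambda>f. c (\<pi> f)" "\<lambda>f. \<theta> (\<pi> f) (Suc E)"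
    using c by (rule cocycle_crossed_hom_mod) simp
  have dvd: "int p dvd c (\<pi> (x k))" if "k \<in> {1..d}" "k \<noteq> i'" for k
    using val[rule_format, of k] that by (simp add: cong_0_iff)
  have "[c (\<pi> (pair_comm j')) = 0] (mod int p ^ Suc E)" if "j' \<in> {1..<(d + 1) div 2} - {j}" for j'
  proof (rule pair_comm_cong_0[OF c assms(2)])
    have "2 * j' \<noteq> i'" "2 * j' + 1 \<noteq> i'"
      using that ji by (auto simp: doubleton_eq_iff)
    then show "int p dvd c (\<pi> (x (2 * j')))" "int p dvd c (\<pi> (x (2 * j' + 1)))"
      using dvd pair_index_bounds that by auto
  qed (use that in simp)
  then have "[c (\<pi> (pair_comm j)) = 0] (mod int p ^ Suc E)"
    using pair_comm_cong_0_of_others[OF c assms(1-3) dvd[of 1] j] i' d_ge_3 by simp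
  then have vanish: "[c (\<pi> (comm F (x i') (x i))) = 0] (mod int p ^ Suc E)"
    using ji A_comm_swap_cong_0 x_carrier i' assms(4) by (auto simp: pair_comm_def doubleton_eq_iff)
  have "int p ^ Suc E dvd c (\<pi> (x i)) * (\<theta> (\<pi> (x i')) (Suc E) - 1)"
    using dvd[of i] assms(4) i' theta_generator_dvd[OF assms(2) i'(1)] by (simp add: mult_dvd_mono)
  moreover have "[c (\<pi> (x i')) = 1] (mod int p)"
    using val[rule_format, of i'] i' by simp
  then have "coprime (c (\<pi> (x i'))) (int p ^ Suc E)"
    by (rule coprime_power_if_cong_1)
  moreover have "x i \<in> carrier F" "x i' \<in> carrier F"
    using x_carrier i' assms(4) by auto
  ultimately have "[\<theta> (\<pi> (x i)) (Suc E) = 1] (mod int p ^ Suc E)"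
    using T_cong_1_of_A_comm_cong_0[OF _ _ vanish] by blast
  then show ?thesis
    using theta_eq_1_of_cong_1 x_carrier \<pi>_carrier assms(4) by simp
qed

lemma theta_generators_eq_1:
  assumes "1 \<le> k" "q = 0 \<or> (\<exists>f\<ge>k. q = p ^ f)"
  shows "\<forall>i\<in>{2..d}. \<theta> (\<pi> (x i)) k = 1"
  using assms
proof (induction k rule: dec_induct)
  case base
  then show ?case
    using orientation x_carrier \<pi>_carrier by (simp add: orientation_def)
next
  case (step k)
  then have "q = 0 \<or> (\<exists>f\<ge>k. q = p ^ f)"
    using Suc_leD by blast
  then show ?case
    using step theta_generators_Suc by blast
qed

lemma q_ne_prime_power:
  assumes "1 \<le> f" "\<forall>i\<in>{2..d}. \<theta> (\<pi> (x i)) f = 1"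
  shows "q \<noteq> p ^ f"
proof
  assume q: "q = p ^ f"
  obtain c where c: "cocycle p G TG \<theta> (Suc f) c"
    and val: "\<forall>k\<in>{1..d}. [c (\<pi> (x k)) = (if k = 1 then 1 else 0)] (mod p)"
    using exists_cocycle_lift[of 1 "Suc f"] d_ge_3 by auto
  interpret crossed_hom_mod F "int p ^ Suc f" "\<lambda>f. c (\<pi> f)" "\<lambda>g. \<theta> (\<pi> g) (Suc f)"
    using c by (rule cocycle_crossed_hom_mod) simp
  let ?X = "x 1 [^]\<^bsub>F\<^esub> q" and ?t = "\<theta> (\<pi> (x 1)) (Suc f)"
  let ?\<Sigma> = "\<Sum>j\<in>{1..<(d + 1) div 2}. c (\<pi> (pair_comm j))"
  have x1: "x 1 \<in> carrier F" "\<pi> (x 1) \<in> carrier G"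
    using x_carrier \<pi>_carrier d_ge_3 by auto
  have "[c (\<pi> (pair_comm j)) = 0] (mod int p ^ Suc f)" if "j \<in> {1..<(d + 1) div 2}" for j
    using pair_comm_cong_0[OF c assms(2) that] pair_index_bounds[OF that]
      val[rule_format, of "2 * j"] val[rule_format, of "2 * j + 1"]
    by (simp add: cong_0_iff)
  then have "int p ^ Suc f dvd \<theta> (\<pi> ?X) (Suc f) * ?\<Sigma>"
    by (intro dvd_mult dvd_sum) (simp add: cong_0_iff)
  moreover have "int p ^ Suc f dvd c (\<pi> ?X) + \<theta> (\<pi> ?X) (Suc f) * ?\<Sigma>"
    using relator_cong_pairs[OF c assms(2)] by (simp add: cong_0_iff)
  ultimately have "int p ^ Suc f dvd c (\<pi> ?X)"
    by (simp add: dvd_add_left_iff)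
  then have "int p ^ Suc f dvd c (\<pi> (x 1)) * (\<Sum>i<q. ?t ^ i)"
    using cong_dvd_iff[OF A_pow[OF x1(1)]] by simp
  moreover have "[c (\<pi> (x 1)) = 1] (mod int p)"
    using val[rule_format, of 1] d_ge_3 by simp
  then have "coprime (int p ^ Suc f) (c (\<pi> (x 1)))"
    using coprime_power_if_cong_1 coprime_commute by blast
  ultimately have "int p ^ Suc f dvd (\<Sum>i<p ^ f. ?t ^ i)"
    using q by (simp add: coprime_dvd_mult_right_iff)
  then show False
    using prime_power_exactly_dvd_geometric_sum[OF prime_p theta_cong_1[OF x1(2)]]
      theta_cong_1_mod_4[OF x1(2)] assms(1) by simp
qed

lemma q_eq_0:
  assumes "q = 0 \<or> (\<exists>f\<ge>1. q = p ^ f)"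
  shows "q = 0"
proof (rule ccontr)
  assume "q \<noteq> 0"
  then obtain f where "1 \<le> f" "q = p ^ f"
    using assms by blast
  then show False
    using q_ne_prime_power theta_generators_eq_1[of f] by blast
qed

lemma theta_generators_trivial:
  assumes "q = 0"
  shows "\<forall>i\<in>{2..d}. \<theta> (\<pi> (x i)) = padic_one p"
proof (intro ballI ext)
  fix i k
  assume i: "i \<in> {2..d}"
  show "\<theta> (\<pi> (x i)) k = padic_one p k"
  proof (cases "k = 0")
    case True
    then show ?thesis
      using theta_range[of "\<pi> (x i)" 0] x_carrier \<pi>_carrier i by (simp add: padic_one_def)
  next
    case False
    then have "1 < int p ^ k"
      using one_less_p by simp
    then show ?thesis
      using theta_generators_eq_1[of k] assms i False by (simp add: padic_one_def)
  qed
qed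

end

theorem proposition3p4:
  fixes p d n q \<nu> :: nat
    and F :: "'f monoid" and TF :: "'f topology" and x :: "nat \<Rightarrow> 'f"
    and G :: "'g monoid" and TG :: "'g topology" and \<pi> :: "'f \<Rightarrow> 'g"
    and r :: "nat \<Rightarrow> 'f" and s :: 'f and \<theta> :: "'g \<Rightarrow> nat \<Rightarrow> int"
  assumes "Factorial_Ring.prime p"
    and "odd d" and "d \<ge> 3"
    and "n \<ge> 2"
    and "q = 0 \<or> (\<exists>f\<ge>1. q = p ^ f)"
    and "p = 2 \<longrightarrow> q \<noteq> 2"
    and "free_pro_p p d F TF x"
    and "pro_p_group p G TG"
    and "\<pi> \<in> hom F G" and "continuous_map TF TG \<pi>" and "\<pi> ` carrier F = carrier G"
    and "\<forall>i\<in>{0..\<nu>}. r i \<in> carrier F"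
    and "kernel F G \<pi> = closed_normal_gen F TF (r ` {0..\<nu>})"
    and "r ` {0..\<nu>} \<subseteq> frattini p F TF"
    and "s \<in> ccomm F TF (ccomm F TF (closed_gen F TF (x ` {3..d})))"
    and "\<forall>i\<in>{1..\<nu>}. r i \<in> ccomm F TF (closed_gen F TF (x ` {3..d}))"
    and "r 0 = x 1 [^]\<^bsub>F\<^esub> q \<otimes>\<^bsub>F\<^esub> lcomm F (x 1) (x 2) n \<otimes>\<^bsub>F\<^esub> comm F (x 2) (x 3)
              \<otimes>\<^bsub>F\<^esub> gprod F (map (\<lambda>j. comm F (x (2 * j)) (x (2 * j + 1))) [2..<(d + 1) div 2])
              \<otimes>\<^bsub>F\<^esub> s"
    and "orientation p G TG \<theta>"
    and "torsion_free_pair p G \<theta>"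
    and "kummerian p G TG \<theta>"
  shows "q = 0 \<and> (\<forall>i\<in>{2..d}. \<theta> (\<pi> (x i)) = padic_one p)"
proof -
  interpret presented_kummerian_pair p d n q \<nu> F TF x G TG \<pi> r s \<theta>
    using assms by unfold_locales auto
  have "q = 0"
    using assms(5) by (rule q_eq_0)
  then show ?thesis
    using theta_generators_trivial by blast
qed

end
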